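(* Every formula $\varphi$ in first normal form is equivalent to a formula $\varphi'$ in second normal form such that $|\varphi'| \leq 3^{\mathrm{gfba}(\varphi)}\cdot|\varphi|$. Moreover, for every $b>0$, if $|\psi|\leq b$ for every limit subformula $\psi$ of $\varphi$, then $|\psi'|\leq b$ for every limit subformula $\psi'$ of $\varphi'$.
   Context: Fix a finite set $Ap$ of atomic propositions. A word is an infinite sequence $w = w[0]w[1]\dots$ of letters of $2^{Ap}$, and $w_i$ denotes the suffix $w[i]w[i+1]\dots$. Formulas are generated by $\varphi ::= \mathbf{true} \mid \mathbf{false} \mid a \mid \neg a \mid \varphi\wedge\varphi \mid \varphi\vee\varphi \mid \mathbf{X}\varphi \mid \varphi\,\mathbf{U}\,\varphi \mid \varphi\,\mathbf{W}\,\varphi \mid \mathbf{GF}\varphi \mid \mathbf{FG}\varphi$ ($a\in Ap$), where $\mathbf{GF}$, $\mathbf{FG}$ are single unary operators (limit operators). Semantics: $w\models a$ iff $a\in w[0]$, $w\models\neg a$ iff $a\notin w[0]$, Boolean constants and connectives as usual; $w\models\mathbf{X}\varphi$ iff $w_1\models\varphi$; $w\models\varphi\mathbf{U}\psi$ iff $\exists k$: $w_k\models\psi$ and $\forall j<k$: $w_j\models\varphi$; $w\models\varphi\mathbf{W}\psi$ iff ($\forall k$: $w_k\models\varphi$) or $w\models\varphi\mathbf{U}\psi$; $w\models\mathbf{GF}\varphi$ iff $w_k\models\varphi$ for infinitely many $k$; $w\models\mathbf{FG}\varphi$ iff $\exists n\,\forall k\geq n$: $w_k\models\varphi$. Two formulas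 are equivalent if satisfied by the same words. The syntax tree $T_\varphi$ has leaves $\mathbf{true},\mathbf{false},a,\neg a$ and one internal node per operator occurrence; $|\varphi|$ is its number of nodes. Formulas with top operator $\mathbf{U},\mathbf{W},\mathbf{X},\mathbf{GF},\mathbf{FG}$ are temporal formulas; those with top operator $\mathbf{GF}$ or $\mathbf{FG}$ are limit formulas, and the corresponding nodes are limit nodes. A node is under another if it is a proper descendant of it. $\mathrm{ubw}(\varphi)$ is the number of $\mathbf{U}$-nodes of $T_\varphi$ that are under some $\mathbf{W}$-node but not under any limit node. $\mathrm{gfba}(\varphi)$ is the number of distinct limit formulas $\psi'$ such that $\psi'$ is a proper subformula of some temporal subformula (proper or not) of $\varphi$. A formula is in first normal form if $\mathrm{ubw}(\varphi)=0$, and in second normal form if $\mathrm{ubw}(\varphi)=0$ and $\mathrm{gfba}(\varphi)=0$. *)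

theory Defs
  imports Main
begin

text \<open>LTL formulas in negation normal form with limit operators GF and FG
  as single unary operators. The atomic propositions form a finite type 'a.\<close>

datatype 'a ltl =
    LTrue
  | LFalse
  | Prop 'a
  | NProp 'a
  | And "'a ltl" "'a ltl"
  | Or "'a ltl" "'a ltl"
  | Next "'a ltl"
  | Until "'a ltl" "'a ltl"
  | WUntil "'a ltl" "'a ltl"
  | GF "'a ltl"
  | FG "'a ltl"

type_synonym 'a word = "nat \<Rightarrow> 'a set"

definition suffix :: "nat \<Rightarrow> 'a word \<Rightarrow> 'a word" where
  "suffix i w = (\<lambda>n. w (n + i))"

primrec sat :: "'a ltl \<Rightarrow> 'a word \<Rightarrow> bool" where
  "sat LTrue w = True"
| "sat LFalse w = False"
| "sat (Prop a) w = (a \<in> w 0)"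
| "sat (NProp a) w = (a \<notin> w 0)"
| "sat (And \<phi> \<psi>) w = (sat \<phi> w \<and> sat \<psi> w)"
| "sat (Or \<phi> \<psi>) w = (sat \<phi> w \<or> sat \<psi> w)"
| "sat (Next \<phi>) w = sat \<phi> (suffix 1 w)"
| "sat (Until \<phi> \<psi>) w = (\<exists>k. sat \<psi> (suffix k w) \<and> (\<forall>j<k. sat \<phi> (suffix j w)))"
| "sat (WUntil \<phi> \<psi>) w = ((\<forall>k. sat \<phi> (suffix k w)) \<or>
       (\<exists>k. sat \<psi> (suffix k w) \<and> (\<forall>j<k. sat \<phi> (suffix j w))))"
| "sat (GF \<phi>) w = (infinite {k. sat \<phi> (suffix k w)})"
| "sat (FG \<phi>) w = (\<exists>n. \<forall>k\<ge>n. sat \<phi> (suffix k w))"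

definition equiv_ltl :: "'a ltl \<Rightarrow> 'a ltl \<Rightarrow> bool" where
  "equiv_ltl \<phi> \<psi> \<longleftrightarrow> (\<forall>w. sat \<phi> w \<longleftrightarrow> sat \<psi> w)"

primrec fsize :: "'a ltl \<Rightarrow> nat" where
  "fsize LTrue = 1"
| "fsize LFalse = 1"
| "fsize (Prop a) = 1"
| "fsize (NProp a) = 1"
| "fsize (And \<phi> \<psi>) = 1 + fsize \<phi> + fsize \<psi>"
| "fsize (Or \<phi> \<psi>) = 1 + fsize \<phi> + fsize \<psi>"
| "fsize (Next \<phi>) = 1 + fsize \<phi>"
| "fsize (Until \<phi> \<psi>) = 1 + fsize \<phi> + fsize \<psi>"
| "fsize (WUntil \<phi> \<psi>) = 1 + fsize \<phi> + fsize \<psi>"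
| "fsize (GF \<phi>) = 1 + fsize \<phi>"
| "fsize (FG \<phi>) = 1 + fsize \<phi>"

primrec subf :: "'a ltl \<Rightarrow> 'a ltl set" where
  "subf LTrue = {LTrue}"
| "subf LFalse = {LFalse}"
| "subf (Prop a) = {Prop a}"
| "subf (NProp a) = {NProp a}"
| "subf (And \<phi> \<psi>) = insert (And \<phi> \<psi>) (subf \<phi> \<union> subf \<psi>)"
| "subf (Or \<phi> \<psi>) = insert (Or \<phi> \<psi>) (subf \<phi> \<union> subf \<psi>)"
| "subf (Next \<phi>) = insert (Next \<phi>) (subf \<phi>)"
| "subf (Until \<phi> \<psi>) = insert (Until \<phi> \<psi>) (subf \<phi> \<union> subf \<psi>)"
| "subf (WUntil \<phi> \<psi>) = insert (WUntil \<phi> \<psi>) (subf \<phi> \<union> subf \<psi>)"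
| "subf (GF \<phi>) = insert (GF \<phi>) (subf \<phi>)"
| "subf (FG \<phi>) = insert (FG \<phi>) (subf \<phi>)"

primrec proper_subf :: "'a ltl \<Rightarrow> 'a ltl set" where
  "proper_subf LTrue = {}"
| "proper_subf LFalse = {}"
| "proper_subf (Prop a) = {}"
| "proper_subf (NProp a) = {}"
| "proper_subf (And \<phi> \<psi>) = subf \<phi> \<union> subf \<psi>"
| "proper_subf (Or \<phi> \<psi>) = subf \<phi> \<union> subf \<psi>"
| "proper_subf (Next \<phi>) = subf \<phi>"
| "proper_subf (Until \<phi> \<psi>) = subf \<phi> \<union> subf \<psi>"
| "proper_subf (WUntil \<phi> \<psi>) = subf \<phi> \<union> subf \<psi>"
| "proper_subf (GF \<phi>) = subf \<phi>"
| "proper_subf (FG \<phi>) = subf \<phi>"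

primrec is_limit :: "'a ltl \<Rightarrow> bool" where
  "is_limit LTrue = False"
| "is_limit LFalse = False"
| "is_limit (Prop a) = False"
| "is_limit (NProp a) = False"
| "is_limit (And \<phi> \<psi>) = False"
| "is_limit (Or \<phi> \<psi>) = False"
| "is_limit (Next \<phi>) = False"
| "is_limit (Until \<phi> \<psi>) = False"
| "is_limit (WUntil \<phi> \<psi>) = False"
| "is_limit (GF \<phi>) = True"
| "is_limit (FG \<phi>) = True"

primrec is_temporal :: "'a ltl \<Rightarrow> bool" where
  "is_temporal LTrue = False"
| "is_temporal LFalse = False"
| "is_temporal (Prop a) = False"
| "is_temporal (NProp a) = False"
| "is_temporal (And \<phi> \<psi>) = False"
| "is_temporal (Or \<phi> \<psi>) = False"
| "is_temporal (Next \<phi>) = True"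
| "is_temporal (Until \<phi> \<psi>) = True"
| "is_temporal (WUntil \<phi> \<psi>) = True"
| "is_temporal (GF \<phi>) = True"
| "is_temporal (FG \<phi>) = True"

text \<open>ubw_aux inW \<phi> counts the U-nodes of the tree of \<phi> that are not under any
  limit node of \<phi> and that are under some W-node, where the flag inW records that
  the root of \<phi> already lies under a W-node (and under no limit node) of the
  enclosing formula.\<close>
primrec ubw_aux :: "bool \<Rightarrow> 'a ltl \<Rightarrow> nat" where
  "ubw_aux b LTrue = 0"
| "ubw_aux b LFalse = 0"
| "ubw_aux b (Prop a) = 0"
| "ubw_aux b (NProp a) = 0"
| "ubw_aux b (And \<phi> \<psi>) = ubw_aux b \<phi> + ubw_aux b \<psi>"
| "ubw_aux b (Or \<phi> \<psi>) = ubw_aux b \<phi> + ubw_aux b \<psi>"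
| "ubw_aux b (Next \<phi>) = ubw_aux b \<phi>"
| "ubw_aux b (Until \<phi> \<psi>) = (if b then 1 else 0) + ubw_aux b \<phi> + ubw_aux b \<psi>"
| "ubw_aux b (WUntil \<phi> \<psi>) = ubw_aux True \<phi> + ubw_aux True \<psi>"
| "ubw_aux b (GF \<phi>) = 0"
| "ubw_aux b (FG \<phi>) = 0"

definition ubw :: "'a ltl \<Rightarrow> nat" where
  "ubw \<phi> = ubw_aux False \<phi>"

definition gfba :: "'a ltl \<Rightarrow> nat" where
  "gfba \<phi> = card {\<psi>'. is_limit \<psi>' \<and>
      (\<exists>\<psi> \<in> subf \<phi>. is_temporal \<psi> \<and> \<psi>' \<in> proper_subf \<psi>)}"

definition first_nf :: "'a ltl \<Rightarrow> bool" where
  "first_nf \<phi> \<longleftrightarrow> ubw \<phi> = 0"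

definition second_nf :: "'a ltl \<Rightarrow> bool" where
  "second_nf \<phi> \<longleftrightarrow> ubw \<phi> = 0 \<and> gfba \<phi> = 0"

definition limit_subf :: "'a ltl \<Rightarrow> 'a ltl set" where
  "limit_subf \<phi> = {\<psi> \<in> subf \<phi>. is_limit \<psi>}"

end

theory Submission
  imports Defs
begin

text \<open>A limit formula L has the same truth value at all suffixes of a word, so inside \<phi> it
  may be replaced by that truth value; since \<phi> is in negation normal form it is monotone in L,
  hence \<phi> is equivalent to (L \<and> \<phi>[L := true]) \<or> \<phi>[L := false]. Choose L of maximal size
  among the limit formulas counted by gfba. Then L occurs in none of the others, so the
  substitution removes L from the count and adds nothing to it, and the new formula has size
  at most 3|\<phi>|. Substituting constants creates no U below a W and no larger limit
  subformula. Repeating this at most gfba \<phi> times yields the second normal form.\<close>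

lemma suffix_0 [simp]: "suffix 0 w = w"
  by (simp add: suffix_def)

lemma suffix_suffix [simp]: "suffix j (suffix k w) = suffix (j + k) w"
  by (simp add: suffix_def add.assoc)

lemma infinite_iff_frequently_sequentially: "infinite {n. P n} \<longleftrightarrow> (\<exists>\<^sub>F n in sequentially. P n)"
  by (simp add: frequently_cofinite flip: cofinite_eq_sequentially)

lemma frequently_sequentially_seg: "(\<exists>\<^sub>F n in sequentially. P (n + k)) \<longleftrightarrow> (\<exists>\<^sub>F n in sequentially. P n)"
  unfolding frequently_def using eventually_sequentially_seg [of "\<lambda>n. \<not> P n"] by simp

lemma sat_limit_suffix:
  assumes "is_limit L"
  shows "sat L (suffix k w) \<longleftrightarrow> sat L w"
proof (cases L)
  case (GF \<psi>)
  then show ?thesis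
    using frequently_sequentially_seg [of "\<lambda>n. sat \<psi> (suffix n w)"]
    by (simp add: infinite_iff_frequently_sequentially)
next
  case (FG \<psi>)
  then show ?thesis
    using eventually_sequentially_seg [of "\<lambda>n. sat \<psi> (suffix n w)"]
    by (simp flip: eventually_sequentially)
qed (use assms in simp_all)

primrec replace :: "'a ltl \<Rightarrow> 'a ltl \<Rightarrow> 'a ltl \<Rightarrow> 'a ltl" where
  "replace L c LTrue = (if LTrue = L then c else LTrue)"
| "replace L c LFalse = (if LFalse = L then c else LFalse)"
| "replace L c (Prop a) = (if Prop a = L then c else Prop a)"
| "replace L c (NProp a) = (if NProp a = L then c else NProp a)"
| "replace L c (And \<phi> \<psi>) = (if And \<phi> \<psi> = L then c else And (replace L c \<phi>) (replace L c \<psi>))"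
| "replace L c (Or \<phi> \<psi>) = (if Or \<phi> \<psi> = L then c else Or (replace L c \<phi>) (replace L c \<psi>))"
| "replace L c (Next \<phi>) = (if Next \<phi> = L then c else Next (replace L c \<phi>))"
| "replace L c (Until \<phi> \<psi>) =
     (if Until \<phi> \<psi> = L then c else Until (replace L c \<phi>) (replace L c \<psi>))"
| "replace L c (WUntil \<phi> \<psi>) =
     (if WUntil \<phi> \<psi> = L then c else WUntil (replace L c \<phi>) (replace L c \<psi>))"
| "replace L c (GF \<phi>) = (if GF \<phi> = L then c else GF (replace L c \<phi>))"
| "replace L c (FG \<phi>) = (if FG \<phi> = L then c else FG (replace L c \<phi>))"

lemma replace_root [simp]: "replace L c L = c"
  by (cases L) auto

lemma replace_self [simp]: "replace L L \<phi> = \<phi>"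
  by (induction \<phi>) auto

text \<open>Formulas are in negation normal form, so every occurrence of L is positive.\<close>
lemma sat_replace_mono:
  assumes "\<And>k. sat c (suffix k w) \<Longrightarrow> sat d (suffix k w)"
    and "sat (replace L c \<phi>) (suffix k w)"
  shows "sat (replace L d \<phi>) (suffix k w)"
  using assms(2)
proof (induction \<phi> arbitrary: k)
  case (GF \<phi>)
  have "{j. sat (replace L c \<phi>) (suffix (j + k) w)} \<subseteq> {j. sat (replace L d \<phi>) (suffix (j + k) w)}"
    using GF.IH by blast
  then show ?case
    using GF.prems assms(1) by (auto split: if_splits dest: finite_subset)
next
  case (Until \<phi> \<psi>)
  then show ?case
    using assms(1) by (simp split: if_splits) blast
next
  case (WUntil \<phi> \<psi>)
  then show ?case
    using assms(1) by (simp split: if_splits) blast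
qed (use assms(1) in \<open>auto split: if_splits\<close>)

lemma sat_replace_iff:
  assumes "\<And>k. sat c (suffix k w) \<longleftrightarrow> sat L (suffix k w)"
  shows "sat (replace L c \<phi>) w \<longleftrightarrow> sat \<phi> w"
  using sat_replace_mono [where d = L and k = 0] sat_replace_mono [where c = L and d = c and k = 0]
    assms by (metis replace_self suffix_0)

definition split_limit :: "'a ltl \<Rightarrow> 'a ltl \<Rightarrow> 'a ltl" where
  "split_limit L \<phi> = Or (And L (replace L LTrue \<phi>)) (replace L LFalse \<phi>)"

lemma sat_split_limit:
  assumes "is_limit L"
  shows "sat (split_limit L \<phi>) w \<longleftrightarrow> sat \<phi> w"
proof (cases "sat L w")
  case True
  then have "sat (replace L LTrue \<phi>) w \<longleftrightarrow> sat \<phi> w"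
    using assms by (intro sat_replace_iff) (simp add: sat_limit_suffix)
  moreover have "sat (replace L LFalse \<phi>) w \<Longrightarrow> sat \<phi> w"
    using sat_replace_mono [of LFalse w L L \<phi> 0] by simp
  ultimately show ?thesis
    using True by (auto simp: split_limit_def)
next
  case False
  then have "sat (replace L LFalse \<phi>) w \<longleftrightarrow> sat \<phi> w"
    using assms by (intro sat_replace_iff) (simp add: sat_limit_suffix)
  then show ?thesis
    using False by (auto simp: split_limit_def)
qed

lemma subf_refl: "\<phi> \<in> subf \<phi>"
  by (cases \<phi>) auto

lemma subf_eq_insert_proper_subf: "subf \<phi> = insert \<phi> (proper_subf \<phi>)"
  by (cases \<phi>) auto

lemma subf_trans: "\<psi> \<in> subf \<phi> \<Longrightarrow> subf \<psi> \<subseteq> subf \<phi>"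
  by (induction \<phi>) auto

lemma finite_subf: "finite (subf \<phi>)"
  by (induction \<phi>) auto

lemma proper_subf_trans: "\<psi> \<in> subf \<phi> \<Longrightarrow> proper_subf \<psi> \<subseteq> proper_subf \<phi>"
  by (induction \<phi>) (auto simp: subf_eq_insert_proper_subf)

lemma fsize_subf: "\<psi> \<in> subf \<phi> \<Longrightarrow> fsize \<psi> \<le> fsize \<phi>"
  by (induction \<phi>) auto

lemma fsize_proper_subf: "\<psi> \<in> proper_subf \<phi> \<Longrightarrow> fsize \<psi> < fsize \<phi>"
  by (cases \<phi>) (auto dest: fsize_subf)

lemma fsize_pos: "0 < fsize \<phi>"
  by (cases \<phi>) auto

lemma fsize_limit: "is_limit L \<Longrightarrow> 2 \<le> fsize L"
  by (cases L) (auto simp: Suc_leI fsize_pos)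

lemma ubw_aux_limit: "is_limit L \<Longrightarrow> ubw_aux b L = 0"
  by (cases L) auto

lemma leaf:
  assumes "proper_subf c = {}"
  shows "subf c = {c}" "\<not> is_limit c" "\<not> is_temporal c" "fsize c = 1" "ubw_aux b c = 0"
proof -
  have "c = LTrue \<or> c = LFalse \<or> (\<exists>a. c = Prop a) \<or> (\<exists>a. c = NProp a)"
    using assms subf_refl by (cases c) auto
  then show "subf c = {c}" "\<not> is_limit c" "\<not> is_temporal c" "fsize c = 1" "ubw_aux b c = 0"
    by auto
qed

lemma replace_id: "L \<notin> subf \<phi> \<Longrightarrow> replace L c \<phi> = \<phi>"
  by (induction \<phi>) auto

text \<open>The second summand makes the claim inductive: where L does not occur, it only says
  that the size does not grow.\<close>
lemma fsize_replace:
  assumes "fsize c \<le> fsize L"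
  shows "fsize (replace L c \<phi>) + (if L \<in> subf \<phi> then fsize L else fsize c) \<le> fsize \<phi> + fsize c"
  using assms by (induction \<phi>) (auto split: if_splits)

lemma fsize_replace_le: "fsize c \<le> fsize L \<Longrightarrow> fsize (replace L c \<phi>) \<le> fsize \<phi>"
  using fsize_replace [of c L \<phi>] by (auto split: if_splits)

lemma subf_replace: "proper_subf c = {} \<Longrightarrow> subf (replace L c \<phi>) \<subseteq> replace L c ` subf \<phi>"
  by (induction \<phi>) (auto simp: leaf(1))

lemma proper_subf_replace:
  assumes "proper_subf c = {}"
  shows "proper_subf (replace L c \<phi>) \<subseteq> replace L c ` proper_subf \<phi>"
  using assms by (cases \<phi>) (auto dest!: subf_replace [OF assms, THEN subsetD])

lemma is_limit_replace: "proper_subf c = {} \<Longrightarrow> is_limit (replace L c \<phi>) \<Longrightarrow> is_limit \<phi>"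
  by (cases \<phi>) (auto simp: leaf(2) split: if_splits)

lemma is_temporal_replace: "proper_subf c = {} \<Longrightarrow> is_temporal (replace L c \<phi>) \<Longrightarrow> is_temporal \<phi>"
  by (cases \<phi>) (auto simp: leaf(3) split: if_splits)

lemma ubw_aux_replace_le:
  "proper_subf c = {} \<Longrightarrow> ubw_aux b (replace L c \<phi>) \<le> ubw_aux b \<phi>"
  by (induction \<phi> arbitrary: b) (simp_all add: add_mono leaf(5))

definition nested_limits :: "'a ltl \<Rightarrow> 'a ltl set" where
  "nested_limits \<phi> =
     {\<psi>'. is_limit \<psi>' \<and> (\<exists>\<psi> \<in> subf \<phi>. is_temporal \<psi> \<and> \<psi>' \<in> proper_subf \<psi>)}"

lemma gfba_eq_card_nested_limits: "gfba \<phi> = card (nested_limits \<phi>)"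
  by (simp add: gfba_def nested_limits_def)

lemma nested_limits_subset_proper_subf: "nested_limits \<phi> \<subseteq> proper_subf \<phi>"
  unfolding nested_limits_def using proper_subf_trans by blast

lemma finite_nested_limits: "finite (nested_limits \<phi>)"
  using nested_limits_subset_proper_subf finite_subf subf_eq_insert_proper_subf
  by (metis finite_insert finite_subset)

lemma nested_limits_mono: "\<psi> \<in> subf \<phi> \<Longrightarrow> nested_limits \<psi> \<subseteq> nested_limits \<phi>"
  unfolding nested_limits_def using subf_trans by blast

lemma nested_limits_replace:
  assumes "proper_subf c = {}"
  shows "nested_limits (replace L c \<phi>) \<subseteq> replace L c ` nested_limits \<phi>"
proof
  fix \<psi>' assume "\<psi>' \<in> nested_limits (replace L c \<phi>)"
  then obtain \<psi> where "is_limit \<psi>'" "\<psi> \<in> subf (replace L c \<phi>)" "is_temporal \<psi>" "\<psi>' \<in> proper_subf \<psi>"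
    unfolding nested_limits_def by blast
  then obtain \<chi> \<chi>' where "\<chi> \<in> subf \<phi>" "is_temporal \<chi>" "\<chi>' \<in> proper_subf \<chi>" "is_limit \<chi>'"
    and "\<psi>' = replace L c \<chi>'"
    using subf_replace [OF assms] proper_subf_replace [OF assms]
      is_temporal_replace [OF assms] is_limit_replace [OF assms] by blast
  then show "\<psi>' \<in> replace L c ` nested_limits \<phi>"
    unfolding nested_limits_def by blast
qed

lemma limit_subf_replace:
  assumes "proper_subf c = {}"
  shows "limit_subf (replace L c \<phi>) \<subseteq> replace L c ` limit_subf \<phi>"
  unfolding limit_subf_def using subf_replace [OF assms] is_limit_replace [OF assms] by blast

lemma ubw_split_limit:
  assumes "is_limit L" and "ubw \<phi> = 0"
  shows "ubw (split_limit L \<phi>) = 0"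
  using assms ubw_aux_replace_le [of LTrue False L \<phi>] ubw_aux_replace_le [of LFalse False L \<phi>]
  by (simp add: ubw_def split_limit_def ubw_aux_limit)

lemma fsize_split_limit:
  assumes "is_limit L" and "L \<in> proper_subf \<phi>"
  shows "fsize (split_limit L \<phi>) \<le> 3 * fsize \<phi>"
proof -
  have "L \<in> subf \<phi>"
    using assms(2) subf_eq_insert_proper_subf by blast
  moreover have "2 \<le> fsize L" "fsize L < fsize \<phi>"
    using fsize_limit [OF assms(1)] fsize_proper_subf [OF assms(2)] by auto
  ultimately have replaced: "fsize (replace L c \<phi>) + fsize L \<le> fsize \<phi> + 1"
    if "c \<in> {LTrue, LFalse}" for c
    using fsize_replace [of c L \<phi>] that by auto
  show ?thesis
    using replaced [of LTrue] replaced [of LFalse] \<open>2 \<le> fsize L\<close> \<open>fsize L < fsize \<phi>\<close>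
    by (simp add: split_limit_def)
qed

lemma limit_subf_split_limit:
  assumes "L \<in> subf \<phi>" and "\<psi>' \<in> limit_subf (split_limit L \<phi>)"
  shows "\<exists>\<psi> \<in> limit_subf \<phi>. fsize \<psi>' \<le> fsize \<psi>"
proof -
  have replaced: "\<exists>\<psi> \<in> limit_subf \<phi>. fsize \<psi>' \<le> fsize \<psi>"
    if "\<psi>' \<in> limit_subf (replace L c \<phi>)" and leaf_c: "proper_subf c = {}" for c
  proof -
    obtain \<psi> where "\<psi> \<in> limit_subf \<phi>" "\<psi>' = replace L c \<psi>"
      using \<open>\<psi>' \<in> limit_subf (replace L c \<phi>)\<close> limit_subf_replace [OF leaf_c] by blast
    moreover have "fsize (replace L c \<psi>) \<le> fsize \<psi>"
      using leaf(4) [OF leaf_c] fsize_pos [of L] by (intro fsize_replace_le) simp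
    ultimately show ?thesis
      by auto
  qed
  have "limit_subf L \<subseteq> limit_subf \<phi>"
    using assms(1) subf_trans unfolding limit_subf_def by blast
  moreover have "\<psi>' \<in> limit_subf L \<or> \<psi>' \<in> limit_subf (replace L LTrue \<phi>) \<or>
      \<psi>' \<in> limit_subf (replace L LFalse \<phi>)"
    using assms(2) by (auto simp: limit_subf_def split_limit_def)
  ultimately show ?thesis
    using replaced [of LTrue] replaced [of LFalse] by auto
qed

lemma nested_limits_split_limit:
  assumes "L \<in> nested_limits \<phi>" and maximal: "\<And>M. M \<in> nested_limits \<phi> \<Longrightarrow> fsize M \<le> fsize L"
  shows "nested_limits (split_limit L \<phi>) \<subseteq> nested_limits \<phi> - {L}"
proof -
  have "L \<in> subf \<phi>"
    using assms(1) nested_limits_subset_proper_subf subf_eq_insert_proper_subf by blast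
  moreover have "L \<notin> nested_limits L"
    using nested_limits_subset_proper_subf fsize_proper_subf by blast
  ultimately have "nested_limits L \<subseteq> nested_limits \<phi> - {L}"
    using nested_limits_mono by blast
  moreover have "nested_limits (replace L c \<phi>) \<subseteq> nested_limits \<phi> - {L}"
    if leaf_c: "proper_subf c = {}" for c
  proof
    fix \<psi> assume \<psi>: "\<psi> \<in> nested_limits (replace L c \<phi>)"
    then obtain M where M: "M \<in> nested_limits \<phi>" "\<psi> = replace L c M"
      using nested_limits_replace [OF leaf_c] by blast
    have "M \<noteq> L"
      using \<psi> M leaf(2) [OF leaf_c] unfolding nested_limits_def by auto
    then have "L \<notin> subf M"
      using maximal [OF M(1)] fsize_proper_subf subf_eq_insert_proper_subf [of M] by fastforce
    then have "\<psi> = M"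
      using M(2) by (simp add: replace_id)
    then show "\<psi> \<in> nested_limits \<phi> - {L}"
      using M(1) \<open>M \<noteq> L\<close> by blast
  qed
  moreover have "nested_limits (split_limit L \<phi>) =
      nested_limits L \<union> nested_limits (replace L LTrue \<phi>) \<union> nested_limits (replace L LFalse \<phi>)"
    by (auto simp: nested_limits_def split_limit_def)
  ultimately show ?thesis
    by auto
qed

lemma gfba_reduction:
  assumes "ubw \<phi> = 0" and "gfba \<phi> \<noteq> 0"
  obtains \<phi>' where "equiv_ltl \<phi> \<phi>'" "ubw \<phi>' = 0" "gfba \<phi>' < gfba \<phi>" "fsize \<phi>' \<le> 3 * fsize \<phi>"
    "\<And>\<psi>'. \<psi>' \<in> limit_subf \<phi>' \<Longrightarrow> \<exists>\<psi> \<in> limit_subf \<phi>. fsize \<psi>' \<le> fsize \<psi>"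
proof -
  obtain L0 where "L0 \<in> nested_limits \<phi>"
    using assms(2) unfolding gfba_eq_card_nested_limits by (metis all_not_in_conv card.empty)
  moreover have "\<forall>M. M \<in> nested_limits \<phi> \<longrightarrow> fsize M < fsize \<phi>"
    using nested_limits_subset_proper_subf fsize_proper_subf by blast
  ultimately obtain L where L: "L \<in> nested_limits \<phi>"
    and maximal: "\<And>M. M \<in> nested_limits \<phi> \<Longrightarrow> fsize M \<le> fsize L"
    using ex_has_greatest_nat [where P = "\<lambda>M. M \<in> nested_limits \<phi>" and f = fsize] by blast
  have "is_limit L" and "L \<in> proper_subf \<phi>"
    using L nested_limits_subset_proper_subf unfolding nested_limits_def by auto
  then have "L \<in> subf \<phi>"
    using subf_eq_insert_proper_subf by blast
  have "card (nested_limits (split_limit L \<phi>)) \<le> card (nested_limits \<phi> - {L})"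
    using nested_limits_split_limit [OF L maximal] finite_nested_limits by (intro card_mono) auto
  also have "\<dots> < card (nested_limits \<phi>)"
    using card_Diff1_less [OF finite_nested_limits L] .
  finally have "card (nested_limits (split_limit L \<phi>)) < card (nested_limits \<phi>)" .
  show thesis
  proof (rule that)
    show "equiv_ltl \<phi> (split_limit L \<phi>)"
      using sat_split_limit [OF \<open>is_limit L\<close>] by (simp add: equiv_ltl_def)
    show "ubw (split_limit L \<phi>) = 0"
      using ubw_split_limit [OF \<open>is_limit L\<close> assms(1)] .
    show "gfba (split_limit L \<phi>) < gfba \<phi>"
      using \<open>card (nested_limits (split_limit L \<phi>)) < card (nested_limits \<phi>)\<close>
      by (simp add: gfba_eq_card_nested_limits)
    show "fsize (split_limit L \<phi>) \<le> 3 * fsize \<phi>"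
      using fsize_split_limit [OF \<open>is_limit L\<close> \<open>L \<in> proper_subf \<phi>\<close>] .
    show "\<exists>\<psi> \<in> limit_subf \<phi>. fsize \<psi>' \<le> fsize \<psi>" if "\<psi>' \<in> limit_subf (split_limit L \<phi>)" for \<psi>'
      using limit_subf_split_limit [OF \<open>L \<in> subf \<phi>\<close> that] .
  qed
qed

theorem proposition2:
  fixes \<phi> :: "'a::finite ltl"
  assumes "first_nf \<phi>"
  shows "\<exists>\<phi>'. equiv_ltl \<phi> \<phi>' \<and> second_nf \<phi>' \<and>
           fsize \<phi>' \<le> 3 ^ gfba \<phi> * fsize \<phi> \<and>
           (\<forall>b::nat. b > 0 \<longrightarrow> (\<forall>\<psi> \<in> limit_subf \<phi>. fsize \<psi> \<le> b) \<longrightarrow>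
                (\<forall>\<psi>' \<in> limit_subf \<phi>'. fsize \<psi>' \<le> b))"
  using assms unfolding first_nf_def
proof (induction "gfba \<phi>" arbitrary: \<phi> rule: less_induct)
  case less
  show ?case
  proof (cases "gfba \<phi> = 0")
    case True
    then show ?thesis
      using less.prems by (auto simp: second_nf_def equiv_ltl_def)
  next
    case False
    then obtain \<phi>1 where \<phi>1: "equiv_ltl \<phi> \<phi>1" "ubw \<phi>1 = 0" "gfba \<phi>1 < gfba \<phi>"
      "fsize \<phi>1 \<le> 3 * fsize \<phi>" "\<And>\<psi>1. \<psi>1 \<in> limit_subf \<phi>1 \<Longrightarrow> \<exists>\<psi> \<in> limit_subf \<phi>. fsize \<psi>1 \<le> fsize \<psi>"
      using gfba_reduction less.prems by blast
    then obtain \<phi>' where \<phi>': "equiv_ltl \<phi>1 \<phi>'" "second_nf \<phi>'" "fsize \<phi>' \<le> 3 ^ gfba \<phi>1 * fsize \<phi>1"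
      "\<forall>b::nat. b > 0 \<longrightarrow> (\<forall>\<psi> \<in> limit_subf \<phi>1. fsize \<psi> \<le> b) \<longrightarrow> (\<forall>\<psi>' \<in> limit_subf \<phi>'. fsize \<psi>' \<le> b)"
      using less.hyps by blast
    have "equiv_ltl \<phi> \<phi>'"
      using \<phi>1(1) \<phi>'(1) by (simp add: equiv_ltl_def)
    moreover have "fsize \<phi>' \<le> 3 ^ Suc (gfba \<phi>1) * fsize \<phi>"
      using \<phi>'(3) \<phi>1(4) by (simp add: order_trans)
    then have "fsize \<phi>' \<le> 3 ^ gfba \<phi> * fsize \<phi>"
      using \<phi>1(3) by (meson Suc_leI le_trans mult_le_mono1 one_le_numeral power_increasing)
    moreover have "\<forall>\<psi> \<in> limit_subf \<phi>1. fsize \<psi> \<le> b" if "\<forall>\<psi> \<in> limit_subf \<phi>. fsize \<psi> \<le> b" for b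
      using \<phi>1(5) that by fastforce
    ultimately show ?thesis
      using \<phi>'(2,4) by blast
  qed
qed

end
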